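(* Let $E$ be a set and regard the power set $\mathscr{P}(E)$ as the Boolean ring $(\mathbf{Z}/2\mathbf{Z})^E$, with addition the symmetric difference, multiplication the intersection, $0=\emptyset$ and $1=-1=E$. For $X\subseteq \mathscr{P}(E)$ set $\mathcal{R}(X)=X\cup\{-1,0,1\}\cup\{x+y : x,y\in X\}\cup\{xy : x,y\in X\}$. Let $(\mathscr{X}_i)_{i\in\mathbf{N}}$ be an increasing sequence of subsets of $\mathscr{P}(E)$ such that $\mathcal{R}(\mathscr{X}_i)\subseteq\mathscr{X}_{i+1}$ for all $i$ and $\bigcup_{i\in\mathbf{N}}\mathscr{X}_i=\mathscr{P}(E)$. Then $\mathscr{P}(E)=\mathscr{X}_i$ for some $i$. *)

theory Defs
  imports Main
begin

definition bool_add :: "'a set \<Rightarrow> 'a set \<Rightarrow> 'a set" where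
  "bool_add x y = (x - y) \<union> (y - x)"

definition bool_mul :: "'a set \<Rightarrow> 'a set \<Rightarrow> 'a set" where
  "bool_mul x y = x \<inter> y"

definition bool_zero :: "'a set" where
  "bool_zero = {}"

definition bool_one :: "'a set \<Rightarrow> 'a set" where
  "bool_one E = E"

definition bool_neg_one :: "'a set \<Rightarrow> 'a set" where
  "bool_neg_one E = E"

definition ring_step :: "'a set \<Rightarrow> 'a set set \<Rightarrow> 'a set set" where
  "ring_step E X = X \<union> {bool_neg_one E, bool_zero, bool_one E}
     \<union> {bool_add x y | x y. x \<in> X \<and> y \<in> X}
     \<union> {bool_mul x y | x y. x \<in> X \<and> y \<in> X}"

end

theory Submission
  imports Defs "HOL-Library.Disjoint_Sets"
begin

text \<open>Call \<open>S \<subseteq> E\<close> bounded if all subsets of \<open>S\<close> occur in a single stage \<open>X n\<close>.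
  Bounded sets are closed under finite unions, since a subset \<open>Q\<close> of \<open>A \<union> B\<close> is the sum
  \<open>(Q \<inter> A) + (Q - A)\<close>. Among infinitely many pairwise disjoint sets \<open>A k\<close> one is bounded:
  otherwise pick \<open>B k \<subseteq> A k\<close> missing a stage beyond both \<open>k\<close> and the stage of \<open>A k\<close>;
  the union of the \<open>B k\<close> lies in some stage \<open>m\<close>, and its product with \<open>A m\<close> is \<open>B m\<close>.
  So if \<open>E\<close> were unbounded, splitting it repeatedly into two unbounded parts would get
  stuck at an unbounded \<open>R\<close> such that of any two complementary parts of \<open>R\<close> one is
  bounded. As \<open>Z = R + (R - Z)\<close>, bounded subsets of \<open>R\<close> then reach arbitrarily late
  stages, which yields an increasing chain \<open>V j\<close> of bounded subsets of \<open>R\<close>, each escaping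
  the stage of its predecessor. But either the union \<open>P\<close> of the layers \<open>V (j + 1) - V j\<close>
  with even \<open>j\<close> or its complement \<open>R - P\<close> is bounded, and together with \<open>V i\<close> it covers
  \<open>V (i + 1)\<close> for every \<open>i\<close> of the matching parity, which puts \<open>V (i + 1)\<close> into a stage
  it escapes once \<open>i\<close> is large.\<close>

lemma splitting_imp_disjoint_family:
  assumes "P E" and split: "\<And>R. R \<subseteq> E \<Longrightarrow> P R \<Longrightarrow> \<exists>S\<subseteq>R. P S \<and> P (R - S)"
  shows "\<exists>A :: nat \<Rightarrow> _. disjoint_family A \<and> (\<forall>k. A k \<subseteq> E \<and> P (A k))"
proof -
  have "\<exists>U. \<forall>k. (U k \<subseteq> E \<and> P (E - U k)) \<and> U k \<subseteq> U (Suc k) \<and> P (U (Suc k) - U k)"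
  proof (rule dependent_nat_choice)
    show "\<exists>U. U \<subseteq> E \<and> P (E - U)"
      using \<open>P E\<close> by (intro exI[of _ "{}"]) simp
  next
    fix U assume U: "U \<subseteq> E \<and> P (E - U)"
    then obtain S where S: "S \<subseteq> E - U" "P S" "P (E - U - S)"
      using split[of "E - U"] by blast
    moreover have "E - (U \<union> S) = E - U - S" and "U \<union> S - U = S"
      using S(1) by blast+
    ultimately show "\<exists>U'. (U' \<subseteq> E \<and> P (E - U')) \<and> U \<subseteq> U' \<and> P (U' - U)"
      using U by (intro exI[of _ "U \<union> S"]) auto
  qed
  then obtain U where "\<And>k. U k \<subseteq> E" and U_Suc: "\<And>k. U k \<subseteq> U (Suc k)"
    and "\<And>k. P (U (Suc k) - U k)"
    by blast
  moreover have "disjoint_family (\<lambda>k. U (Suc k) - U k)"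
    using U_Suc by (rule disjoint_family_Suc)
  ultimately show ?thesis
    by blast
qed

lemma even_layers_split:
  assumes "\<And>j. V j \<subseteq> V (Suc j)"
  defines "P \<equiv> \<Union>j\<in>{j. even j}. V (Suc j) - V j"
  shows "even i \<Longrightarrow> V (Suc i) \<subseteq> P \<union> V i"
    and "odd i \<Longrightarrow> V (Suc i) \<inter> P \<subseteq> V i"
proof -
  show "even i \<Longrightarrow> V (Suc i) \<subseteq> P \<union> V i"
    unfolding P_def by blast
  have "disjoint_family (\<lambda>j. V (Suc j) - V j)"
    using assms(1) by (rule disjoint_family_Suc)
  then have "(V (Suc i) - V i) \<inter> (V (Suc j) - V j) = {}" if "odd i" "even j" for j
    using that by (intro disjoint_family_onD) auto
  then show "odd i \<Longrightarrow> V (Suc i) \<inter> P \<subseteq> V i"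
    unfolding P_def by blast
qed

locale ring_exhaustion =
  fixes E :: "'a set" and X :: "nat \<Rightarrow> 'a set set"
  assumes X_Suc: "\<And>i. X i \<subseteq> X (Suc i)"
    and add_closed: "\<And>n x y. x \<in> X n \<Longrightarrow> y \<in> X n \<Longrightarrow> bool_add x y \<in> X (Suc n)"
    and mul_closed: "\<And>n x y. x \<in> X n \<Longrightarrow> y \<in> X n \<Longrightarrow> bool_mul x y \<in> X (Suc n)"
    and exhausting: "Pow E \<subseteq> (\<Union>i. X i)"
begin

lemma X_mono: "m \<le> n \<Longrightarrow> X m \<subseteq> X n"
  by (rule lift_Suc_mono_le[of X, OF X_Suc])

lemma in_some_stage: "S \<subseteq> E \<Longrightarrow> \<exists>n. S \<in> X n"
  using exhausting by blast

definition bounded :: "'a set \<Rightarrow> bool" where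
  "bounded S \<longleftrightarrow> (\<exists>n. Pow S \<subseteq> X n)"

lemma Pow_Un_stage:
  assumes "Pow A \<subseteq> X n" and "Pow B \<subseteq> X n"
  shows "Pow (A \<union> B) \<subseteq> X (Suc n)"
proof
  fix Q assume "Q \<in> Pow (A \<union> B)"
  then have "Q \<inter> A \<in> X n" and "Q - A \<in> X n"
    using assms by blast+
  then have "bool_add (Q \<inter> A) (Q - A) \<in> X (Suc n)"
    by (rule add_closed)
  moreover have "bool_add (Q \<inter> A) (Q - A) = Q"
    by (auto simp: bool_add_def)
  ultimately show "Q \<in> X (Suc n)"
    by simp
qed

lemma bounded_Un: "bounded A \<Longrightarrow> bounded B \<Longrightarrow> bounded (A \<union> B)"
  unfolding bounded_def by (metis Pow_Un_stage X_mono max.cobounded1 max.cobounded2 order_trans)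

lemma disjoint_family_has_bounded:
  fixes A :: "nat \<Rightarrow> 'a set"
  assumes disj: "disjoint_family A" and AE: "\<And>k. A k \<subseteq> E"
  shows "\<exists>k. bounded (A k)"
proof (rule ccontr)
  assume "\<nexists>k. bounded (A k)"
  obtain j where j: "\<And>k. A k \<in> X (j k)"
    using in_some_stage[OF AE] by metis
  define s where "s k = Suc (max k (j k))" for k
  have "\<exists>B\<subseteq>A k. B \<notin> X (s k)" for k
    using \<open>\<nexists>k. bounded (A k)\<close> unfolding bounded_def by blast
  then obtain B where BA: "\<And>k. B k \<subseteq> A k" and B_late: "\<And>k. B k \<notin> X (s k)"
    by metis
  obtain m where m: "(\<Union>k. B k) \<in> X m"
    using in_some_stage[of "\<Union>k. B k"] BA AE by blast
  have "B k \<inter> A m \<subseteq> B m" for k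
    using disjoint_family_onD[OF disj, of k m] BA[of k] by (cases "k = m") auto
  then have "bool_mul (\<Union>k. B k) (A m) = B m"
    using BA[of m] unfolding bool_mul_def by blast
  moreover have "bool_mul (\<Union>k. B k) (A m) \<in> X (s m)"
    unfolding s_def using m j[of m] X_mono[of m "max m (j m)"] X_mono[of "j m" "max m (j m)"]
    by (intro mul_closed) auto
  ultimately show False
    using B_late by simp
qed

definition unsplittable :: "'a set \<Rightarrow> bool" where
  "unsplittable R \<longleftrightarrow> R \<subseteq> E \<and> \<not> bounded R \<and> (\<forall>S\<subseteq>R. bounded S \<or> bounded (R - S))"

lemma ex_unsplittable_if_unbounded:
  assumes "\<not> bounded E"
  shows "\<exists>R. unsplittable R"
proof (rule ccontr)
  assume "\<not> ?thesis"
  then have "\<exists>A :: nat \<Rightarrow> 'a set. disjoint_family A \<and> (\<forall>k. A k \<subseteq> E \<and> \<not> bounded (A k))"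
    using assms unfolding unsplittable_def
    by (intro splitting_imp_disjoint_family[where P = "\<lambda>S. \<not> bounded S"]) auto
  then obtain A :: "nat \<Rightarrow> 'a set" where "disjoint_family A" "\<And>k. A k \<subseteq> E" "\<And>k. \<not> bounded (A k)"
    by blast
  then show False
    using disjoint_family_has_bounded by blast
qed

lemma unsplittable_has_late_bounded_subset:
  assumes "unsplittable R"
  shows "\<exists>Y\<subseteq>R. bounded Y \<and> \<not> Pow Y \<subseteq> X N"
proof -
  have "R \<subseteq> E" and "\<not> bounded R" and unsplit: "\<forall>S\<subseteq>R. bounded S \<or> bounded (R - S)"
    using assms unfolding unsplittable_def by blast+
  obtain r where r: "R \<in> X r"
    using in_some_stage \<open>R \<subseteq> E\<close> by blast
  let ?n = "max N r"
  obtain Z where Z: "Z \<subseteq> R" "Z \<notin> X (Suc ?n)"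
    using \<open>\<not> bounded R\<close> unfolding bounded_def by blast
  moreover have "X N \<subseteq> X (Suc ?n)"
    by (rule X_mono) simp
  ultimately have "Z \<notin> X N"
    by blast
  have "\<not> Pow (R - Z) \<subseteq> X N"
  proof
    assume "Pow (R - Z) \<subseteq> X N"
    then have "R - Z \<in> X ?n"
      using X_mono[of N ?n] by auto
    moreover have "R \<in> X ?n"
      using r X_mono[of r ?n] by auto
    ultimately have "bool_add R (R - Z) \<in> X (Suc ?n)"
      by (rule add_closed[rotated])
    moreover have "bool_add R (R - Z) = Z"
      using \<open>Z \<subseteq> R\<close> by (auto simp: bool_add_def)
    ultimately show False
      using Z by simp
  qed
  from unsplit \<open>Z \<subseteq> R\<close> consider "bounded Z" | "bounded (R - Z)"
    by blast
  then show ?thesis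
  proof cases
    case 1
    with \<open>Z \<subseteq> R\<close> \<open>Z \<notin> X N\<close> show ?thesis
      by blast
  next
    case 2
    with \<open>\<not> Pow (R - Z) \<subseteq> X N\<close> show ?thesis
      by blast
  qed
qed

lemma escaping_chain:
  assumes escape: "\<And>N. \<exists>Y\<subseteq>R. bounded Y \<and> \<not> Pow Y \<subseteq> X N"
  obtains V g where "\<And>j. V j \<subseteq> R" and "\<And>j. Pow (V j) \<subseteq> X (g j)" and "\<And>j. j \<le> g j"
    and "\<And>j. V j \<subseteq> V (Suc j)" and "\<And>j. \<not> Pow (V (Suc j)) \<subseteq> X (Suc (g j))"
proof -
  let ?P = "\<lambda>j (V, g). V \<subseteq> R \<and> Pow V \<subseteq> X g \<and> j \<le> g"
  let ?Q = "\<lambda>j (V, g) (V', g'). V \<subseteq> V' \<and> \<not> Pow V' \<subseteq> X (Suc g)"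
  have "\<exists>f. \<forall>j. ?P j (f j) \<and> ?Q j (f j) (f (Suc j))"
  proof (rule dependent_nat_choice)
    obtain Y n where "Y \<subseteq> R" "Pow Y \<subseteq> X n"
      using escape[of 0] unfolding bounded_def by blast
    then show "\<exists>x. ?P 0 x"
      by (intro exI[of _ "(Y, n)"]) simp
  next
    fix x j assume "?P j x"
    moreover obtain V g where x: "x = (V, g)"
      by (cases x)
    ultimately have "V \<subseteq> R" "Pow V \<subseteq> X g"
      by simp_all
    obtain Y where Y: "Y \<subseteq> R" "bounded Y" "\<not> Pow Y \<subseteq> X (Suc g)"
      using escape[of "Suc g"] by blast
    have "bounded V"
      using \<open>Pow V \<subseteq> X g\<close> unfolding bounded_def by blast
    then obtain g' where "Pow (V \<union> Y) \<subseteq> X g'"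
      using bounded_Un[OF _ \<open>bounded Y\<close>] unfolding bounded_def by blast
    then have "Pow (V \<union> Y) \<subseteq> X (max (Suc j) g')"
      using X_mono[of g' "max (Suc j) g'"] by simp
    with \<open>V \<subseteq> R\<close> Y show "\<exists>y. ?P (Suc j) y \<and> ?Q j x y"
      unfolding x by (intro exI[of _ "(V \<union> Y, max (Suc j) g')"]) auto
  qed
  then obtain f where f: "\<And>j. ?P j (f j) \<and> ?Q j (f j) (f (Suc j))"
    by blast
  have "fst (f j) \<subseteq> R \<and> Pow (fst (f j)) \<subseteq> X (snd (f j)) \<and> j \<le> snd (f j)
      \<and> fst (f j) \<subseteq> fst (f (Suc j)) \<and> \<not> Pow (fst (f (Suc j))) \<subseteq> X (Suc (snd (f j)))" for j
    using f[of j] by (simp add: case_prod_beta)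
  then show thesis
    by (intro that[of "\<lambda>j. fst (f j)" "\<lambda>j. snd (f j)"]) simp_all
qed

lemma not_unsplittable: "\<not> unsplittable R"
proof
  assume "unsplittable R"
  then have unsplit: "\<forall>S\<subseteq>R. bounded S \<or> bounded (R - S)"
    unfolding unsplittable_def by blast
  obtain V g where VR: "\<And>j. V j \<subseteq> R" and V_stage: "\<And>j. Pow (V j) \<subseteq> X (g j)"
    and g_ge: "\<And>j. j \<le> g j" and V_Suc: "\<And>j. V j \<subseteq> V (Suc j)"
    and V_escape: "\<And>j. \<not> Pow (V (Suc j)) \<subseteq> X (Suc (g j))"
    using escaping_chain[OF unsplittable_has_late_bounded_subset[OF \<open>unsplittable R\<close>]] by blast
  have too_early: False if "V (Suc i) \<subseteq> T \<union> V i" and "Pow T \<subseteq> X m" and "m \<le> i" for T m i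
  proof -
    have "Pow T \<subseteq> X (g i)"
      using \<open>Pow T \<subseteq> X m\<close> X_mono[of m "g i"] \<open>m \<le> i\<close> g_ge[of i] by auto
    then have "Pow (T \<union> V i) \<subseteq> X (Suc (g i))"
      using V_stage by (rule Pow_Un_stage)
    then show False
      using V_escape[of i] \<open>V (Suc i) \<subseteq> T \<union> V i\<close> by blast
  qed
  define P where "P = (\<Union>j\<in>{j. even j}. V (Suc j) - V j)"
  have "P \<subseteq> R"
    unfolding P_def using VR by blast
  then consider "bounded P" | "bounded (R - P)"
    using unsplit by blast
  then show False
  proof cases
    case 1
    then obtain m where "Pow P \<subseteq> X m"
      unfolding bounded_def by blast
    moreover have "V (Suc (2 * m)) \<subseteq> P \<union> V (2 * m)"
      unfolding P_def by (rule even_layers_split(1)[of V, OF V_Suc]) simp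
    ultimately show False
      using too_early[of "2 * m" P m] by simp
  next
    case 2
    then obtain m where "Pow (R - P) \<subseteq> X m"
      unfolding bounded_def by blast
    moreover have "V (Suc (Suc (2 * m))) \<inter> P \<subseteq> V (Suc (2 * m))"
      unfolding P_def by (rule even_layers_split(2)[of V, OF V_Suc]) simp
    then have "V (Suc (Suc (2 * m))) \<subseteq> (R - P) \<union> V (Suc (2 * m))"
      using VR by blast
    ultimately show False
      using too_early[of "Suc (2 * m)" "R - P" m] by simp
  qed
qed

theorem exhausted_at_some_stage: "\<exists>n. Pow E \<subseteq> X n"
  using ex_unsplittable_if_unbounded not_unsplittable unfolding bounded_def by blast

end

lemma ring_exhaustion_if_ring_step:
  assumes "\<And>i. X i \<subseteq> X (Suc i)" and step: "\<And>i. ring_step E (X i) \<subseteq> X (Suc i)"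
    and "(\<Union>i. X i) = Pow E"
  shows "ring_exhaustion E X"
proof
  show "bool_add x y \<in> X (Suc n)" and "bool_mul x y \<in> X (Suc n)" if "x \<in> X n" "y \<in> X n" for n x y
  proof -
    have "bool_add x y \<in> ring_step E (X n)" and "bool_mul x y \<in> ring_step E (X n)"
      using that unfolding ring_step_def by auto
    then show "bool_add x y \<in> X (Suc n)" and "bool_mul x y \<in> X (Suc n)"
      using step[of n] by blast+
  qed
qed (use assms in auto)

theorem mainTheorem5:
  fixes E :: "'a set" and X :: "nat \<Rightarrow> 'a set set"
  assumes sub: "\<And>i. X i \<subseteq> Pow E"
    and incr: "\<And>i. X i \<subseteq> X (Suc i)"
    and step: "\<And>i. ring_step E (X i) \<subseteq> X (Suc i)"
    and cover: "(\<Union>i. X i) = Pow E"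
  shows "\<exists>i. Pow E = X i"
proof -
  interpret ring_exhaustion E X
    using incr step cover by (rule ring_exhaustion_if_ring_step)
  obtain n where "Pow E \<subseteq> X n"
    using exhausted_at_some_stage by blast
  with sub[of n] show ?thesis
    by blast
qed

end
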